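(* Let $p\ge 1$ and let $L$ be an H$_p$-A$(1)$ algebra over $\mathbb{C}$. Then $L$ has a basis $\{ x_1, \dots, x_{2p+1}, y \}$ such that $NP(L) = \mathrm{Span}\{ y \}$, $$[x_1, x_2] = [x_3,x_4]=\cdots = [x_{2p-1}, x_{2p}] = x_{2p+1},$$ $$[x_1, y] = y, \qquad [x_i, y] = 0 \ \text{ for } i=2, \dots, 2p+1,$$ and $[x_i, x_j] = 0$ for all $1\le i<j\le 2p+1$ with $(i,j) \neq (2l-1, 2l)$, $l = 1, \dots, p$. Consequently, for each fixed $p$, any two H$_p$-A$(1)$ algebras are isomorphic.
   Context: For a finite-dimensional Lie algebra $L$, the lower central series is $L^0=L$, $L^{k+1}=[L,L^k]$, and the near perfect radical $NP(L)$ is its smallest term (equivalently, the largest ideal $I$ of $L$ with $[L,I]=I$). The Heisenberg algebra H$_p$ is the $(2p+1)$-dimensional Lie algebra with basis $\{e_1,\dots,e_{2p+1}\}$ whose only nonzero brackets (up to antisymmetry) are $[e_1,e_2]=[e_3,e_4]=\cdots=[e_{2p-1},e_{2p}]=e_{2p+1}$. $L$ is called an H$_p$-A$(n)$ algebra if $L/NP(L)$ is isomorphic to H$_p$ and $NP(L)$ is an Abelian Lie algebra of dimension $n$. *)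

theory Defs
  imports Complex_Main
begin

definition lie_algebra :: "(complex \<Rightarrow> 'a::ab_group_add \<Rightarrow> 'a) \<Rightarrow> ('a \<Rightarrow> 'a \<Rightarrow> 'a) \<Rightarrow> bool" where
  "lie_algebra sm br \<longleftrightarrow> vector_space sm
     \<and> (\<forall>x y z. br (x + y) z = br x z + br y z)
     \<and> (\<forall>x y z. br x (y + z) = br x y + br x z)
     \<and> (\<forall>c x y. br (sm c x) y = sm c (br x y))
     \<and> (\<forall>c x y. br x (sm c y) = sm c (br x y))
     \<and> (\<forall>x. br x x = 0)
     \<and> (\<forall>x y z. br x (br y z) + br y (br z x) + br z (br x y) = 0)"

definition fin_dim :: "(complex \<Rightarrow> 'a::ab_group_add \<Rightarrow> 'a) \<Rightarrow> bool" where
  "fin_dim sm \<longleftrightarrow> (\<exists>B. finite B \<and> module.span sm B = UNIV)"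

fun lcs :: "(complex \<Rightarrow> 'a::ab_group_add \<Rightarrow> 'a) \<Rightarrow> ('a \<Rightarrow> 'a \<Rightarrow> 'a) \<Rightarrow> nat \<Rightarrow> 'a set" where
  "lcs sm br 0 = UNIV"
| "lcs sm br (Suc k) = module.span sm {br x y | x y. y \<in> lcs sm br k}"

text \<open>Near perfect radical: the smallest term of the (decreasing) lower central series,
i.e. the intersection of all its terms.\<close>
definition NP :: "(complex \<Rightarrow> 'a::ab_group_add \<Rightarrow> 'a) \<Rightarrow> ('a \<Rightarrow> 'a \<Rightarrow> 'a) \<Rightarrow> 'a set" where
  "NP sm br = (\<Inter>k. lcs sm br k)"

text \<open>Heisenberg algebra H_p realised on coordinate vectors nat => complex supported
on {1..2p+1} (coordinate i = coefficient of e_i).\<close>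
definition heis_carrier :: "nat \<Rightarrow> (nat \<Rightarrow> complex) set" where
  "heis_carrier p = {v. \<forall>i. i \<notin> {1..2*p+1} \<longrightarrow> v i = 0}"

definition heis_br :: "nat \<Rightarrow> (nat \<Rightarrow> complex) \<Rightarrow> (nat \<Rightarrow> complex) \<Rightarrow> (nat \<Rightarrow> complex)" where
  "heis_br p u v = (\<lambda>i. if i = 2*p+1
      then (\<Sum>l\<in>{1..p}. u (2*l-1) * v (2*l) - u (2*l) * v (2*l-1)) else 0)"

text \<open>L is an H_p-A(n) algebra: L/NP(L) is isomorphic to H_p (expressed as a surjective
Lie algebra homomorphism onto H_p with kernel NP(L)), and NP(L) is abelian of dimension n.\<close>
definition HpA :: "nat \<Rightarrow> nat \<Rightarrow> (complex \<Rightarrow> 'a::ab_group_add \<Rightarrow> 'a) \<Rightarrow> ('a \<Rightarrow> 'a \<Rightarrow> 'a) \<Rightarrow> bool" where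
  "HpA p n sm br \<longleftrightarrow>
     (\<exists>\<phi> :: 'a \<Rightarrow> (nat \<Rightarrow> complex).
        (\<forall>u v. \<phi> (u + v) = (\<lambda>i. \<phi> u i + \<phi> v i))
      \<and> (\<forall>c u. \<phi> (sm c u) = (\<lambda>i. c * \<phi> u i))
      \<and> (\<forall>u v. \<phi> (br u v) = heis_br p (\<phi> u) (\<phi> v))
      \<and> range \<phi> = heis_carrier p
      \<and> {u. \<phi> u = (\<lambda>_. 0)} = NP sm br)
   \<and> (\<forall>u\<in>NP sm br. \<forall>v\<in>NP sm br. br u v = 0)
   \<and> vector_space.dim sm (NP sm br) = n"

definition lie_iso :: "(complex \<Rightarrow> 'a::ab_group_add \<Rightarrow> 'a) \<Rightarrow> ('a \<Rightarrow> 'a \<Rightarrow> 'a)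
    \<Rightarrow> (complex \<Rightarrow> 'b::ab_group_add \<Rightarrow> 'b) \<Rightarrow> ('b \<Rightarrow> 'b \<Rightarrow> 'b) \<Rightarrow> ('a \<Rightarrow> 'b) \<Rightarrow> bool" where
  "lie_iso sm1 br1 sm2 br2 f \<longleftrightarrow> Vector_Spaces.linear sm1 sm2 f \<and> bij f
     \<and> (\<forall>u v. f (br1 u v) = br2 (f u) (f v))"

end

theory Submission
  imports Defs "HOL-Library.Function_Algebras"
begin

text \<open>Let \<open>NP(L) = \<complex> y\<close>. Since \<open>NP(L)\<close> is an ideal, \<open>[u, y] = w(u) y\<close> for a linear functional \<open>w\<close>
  vanishing on \<open>[L, L]\<close>, and \<open>w \<noteq> 0\<close>, for otherwise \<open>L\<^sup>3 = 0\<close> although \<open>0 \<noteq> y \<in> L\<^sup>3\<close>. For \<open>a\<close>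
  with \<open>w(a) = 1\<close>, \<open>ad\<^sub>a\<^sup>2\<close> is a projection onto \<open>\<complex> y\<close> whose kernel is a subalgebra mapped isomorphically
  onto \<open>H\<^sub>p\<close>. Transported to \<open>H\<^sub>p\<close>, \<open>w\<close> is a nonzero functional vanishing on the centre, so there
  is a symplectic basis of \<open>H\<^sub>p\<close> whose first vector has weight \<open>1\<close> and all others weight \<open>0\<close>.
  Lifting it and adding \<open>y\<close> gives a basis with structure constants depending only on \<open>p\<close>, which
  proves both the normal form and the uniqueness up to isomorphism.\<close>

section \<open>Linear algebra\<close>

lemma bilinear_eq_on_span:
  fixes s1 :: "complex \<Rightarrow> 'a::ab_group_add \<Rightarrow> 'a" and s2 :: "complex \<Rightarrow> 'b::ab_group_add \<Rightarrow> 'b"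
  assumes "vector_space s1" "vector_space s2"
    and span_B: "module.span s1 B = UNIV"
    and "\<And>u. Vector_Spaces.linear s1 s2 (F u)" "\<And>u. Vector_Spaces.linear s1 s2 (G u)"
    and "\<And>v. Vector_Spaces.linear s1 s2 (\<lambda>u. F u v)" "\<And>v. Vector_Spaces.linear s1 s2 (\<lambda>u. G u v)"
    and eq_B: "\<And>u v. u \<in> B \<Longrightarrow> v \<in> B \<Longrightarrow> F u v = G u v"
  shows "F u v = G u v"
proof -
  interpret vector_space_pair s1 s2 using assms(1,2) by (simp add: vector_space_pair_def)
  have eq_B_left: "F u' v' = G u' v'" if "u' \<in> B" for u' v'
    by (rule linear_eq_on[OF assms(4,5)]) (use span_B eq_B that in auto)
  have "(\<lambda>u. F u v) u = (\<lambda>u. G u v) u"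
    by (rule linear_eq_on[OF assms(6,7), of _ B]) (use span_B eq_B_left in auto)
  then show ?thesis by simp
qed

lemma linear_bij_mapping_basis:
  fixes s1 :: "complex \<Rightarrow> 'a::ab_group_add \<Rightarrow> 'a" and s2 :: "complex \<Rightarrow> 'b::ab_group_add \<Rightarrow> 'b"
  assumes "vector_space s1" "vector_space s2"
    and "inj_on b1 A" "\<not> module.dependent s1 (b1 ` A)" "module.span s1 (b1 ` A) = UNIV"
    and "inj_on b2 A" "\<not> module.dependent s2 (b2 ` A)" "module.span s2 (b2 ` A) = UNIV"
  shows "\<exists>f. Vector_Spaces.linear s1 s2 f \<and> bij f \<and> (\<forall>i\<in>A. f (b1 i) = b2 i)"
proof -
  interpret vs1: vector_space s1 by fact
  interpret vs2: vector_space s2 by fact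
  interpret p12: vector_space_pair s1 s2 by unfold_locales
  interpret p21: vector_space_pair s2 s1 by unfold_locales
  interpret p11: vector_space_pair s1 s1 by unfold_locales
  interpret p22: vector_space_pair s2 s2 by unfold_locales
  define f where "f = p12.construct (b1 ` A) (\<lambda>v. b2 (the_inv_into A b1 v))"
  define g where "g = p21.construct (b2 ` A) (\<lambda>v. b1 (the_inv_into A b2 v))"
  have lin_f: "Vector_Spaces.linear s1 s2 f" and lin_g: "Vector_Spaces.linear s2 s1 g"
    unfolding f_def g_def by (intro p12.linear_construct p21.linear_construct assms)+
  have f_b1: "f (b1 i) = b2 i" and g_b2: "g (b2 i) = b1 i" if "i \<in> A" for i
    using that p12.construct_basis[OF assms(4)] p21.construct_basis[OF assms(7)]
      the_inv_into_f_f[OF assms(3)] the_inv_into_f_f[OF assms(6)]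
    by (auto simp: f_def g_def)
  have "g \<circ> f = id"
    by (rule ext, rule p11.linear_eq_on[OF Vector_Spaces.linear_compose[OF lin_f lin_g] vs1.linear_id,
          of _ "b1 ` A"]) (use assms(5) f_b1 g_b2 in auto)
  moreover have "f \<circ> g = id"
    by (rule ext, rule p22.linear_eq_on[OF Vector_Spaces.linear_compose[OF lin_g lin_f] vs2.linear_id,
          of _ "b2 ` A"]) (use assms(8) f_b1 g_b2 in auto)
  ultimately have "bij f"
    by (rule o_bij)
  with lin_f f_b1 show ?thesis by blast
qed

section \<open>Complex Lie algebras\<close>

locale complex_lie_algebra =
  fixes sm :: "complex \<Rightarrow> 'a::ab_group_add \<Rightarrow> 'a" and br :: "'a \<Rightarrow> 'a \<Rightarrow> 'a"
  assumes lie_algebra: "lie_algebra sm br"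
begin

sublocale vector_space sm
  using lie_algebra by (simp add: lie_algebra_def)

lemma br_add_left: "br (x + y) z = br x z + br y z"
  and br_add_right: "br x (y + z) = br x y + br x z"
  and br_scale_left [simp]: "br (sm c x) y = sm c (br x y)"
  and br_scale_right [simp]: "br x (sm c y) = sm c (br x y)"
  and br_self [simp]: "br x x = 0"
  and jacobi: "br x (br y z) + br y (br z x) + br z (br x y) = 0"
  using lie_algebra by (simp_all add: lie_algebra_def)

lemma br_zero_left [simp]: "br 0 x = 0"
  using br_add_left[of 0 0 x] by simp

lemma br_zero_right [simp]: "br x 0 = 0"
  using br_add_right[of x 0 0] by simp

lemma br_anticomm: "br x y = - br y x"
proof -
  have "br x y + br y x = 0"
    using br_self[of "x + y"] unfolding br_add_left br_add_right by (simp add: add.commute)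
  then show ?thesis by (simp add: eq_neg_iff_add_eq_0)
qed

lemma br_neg_left [simp]: "br (- x) y = - br x y"
  using br_scale_left[of "-1" x y] by simp

lemma br_neg_right [simp]: "br x (- y) = - br x y"
  using br_scale_right[of x "-1" y] by simp

lemma br_diff_right: "br x (y - z) = br x y - br x z"
  using br_add_right[of x y "- z"] by simp

lemma br_derivation: "br a (br u v) = br (br a u) v + br u (br a v)"
proof -
  have "br a (br u v) + - br u (br a v) + - br (br a u) v = 0"
    using jacobi[of a u v] br_anticomm[of v a] br_anticomm[of v "br a u"] by simp
  then show ?thesis by (simp add: diff_eq_eq)
qed

lemma linear_br_left: "Vector_Spaces.linear sm sm (\<lambda>u. br u v)"
  and linear_br_right: "Vector_Spaces.linear sm sm (br u)"
  unfolding Vector_Spaces.linear_iff using vector_space_axioms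
  by (simp_all add: br_add_left br_add_right)

end

lemma lie_iso_of_structure_constants:
  fixes sm1 :: "complex \<Rightarrow> 'a::ab_group_add \<Rightarrow> 'a" and sm2 :: "complex \<Rightarrow> 'b::ab_group_add \<Rightarrow> 'b"
  assumes "lie_algebra sm1 br1" "lie_algebra sm2 br2"
    and "inj_on b1 A" "\<not> module.dependent sm1 (b1 ` A)" "module.span sm1 (b1 ` A) = UNIV"
    and "inj_on b2 A" "\<not> module.dependent sm2 (b2 ` A)" "module.span sm2 (b2 ` A) = UNIV"
    and br1_b1: "\<And>i k. i \<in> A \<Longrightarrow> k \<in> A \<Longrightarrow> br1 (b1 i) (b1 k) = (\<Sum>l\<in>A. sm1 (c i k l) (b1 l))"
    and br2_b2: "\<And>i k. i \<in> A \<Longrightarrow> k \<in> A \<Longrightarrow> br2 (b2 i) (b2 k) = (\<Sum>l\<in>A. sm2 (c i k l) (b2 l))"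
  shows "\<exists>f. lie_iso sm1 br1 sm2 br2 f"
proof -
  interpret L1: complex_lie_algebra sm1 br1 using assms(1) by unfold_locales
  interpret L2: complex_lie_algebra sm2 br2 using assms(2) by unfold_locales
  interpret vector_space_pair sm1 sm2 by unfold_locales
  obtain f where lin_f: "Vector_Spaces.linear sm1 sm2 f" and "bij f"
    and f_b1: "\<And>i. i \<in> A \<Longrightarrow> f (b1 i) = b2 i"
    using linear_bij_mapping_basis[OF L1.vector_space_axioms L2.vector_space_axioms assms(3-8)]
    by blast
  have "f (br1 u v) = br2 (f u) (f v)" for u v
  proof (rule bilinear_eq_on_span[OF L1.vector_space_axioms L2.vector_space_axioms assms(5)])
    show "Vector_Spaces.linear sm1 sm2 (\<lambda>v. f (br1 u v))"
      "Vector_Spaces.linear sm1 sm2 (\<lambda>u. f (br1 u v))" for u v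
      using Vector_Spaces.linear_compose[OF L1.linear_br_right lin_f]
        Vector_Spaces.linear_compose[OF L1.linear_br_left lin_f] by (simp_all add: comp_def)
    show "Vector_Spaces.linear sm1 sm2 (\<lambda>v. br2 (f u) (f v))"
      "Vector_Spaces.linear sm1 sm2 (\<lambda>u. br2 (f u) (f v))" for u v
      using Vector_Spaces.linear_compose[OF lin_f L2.linear_br_right]
        Vector_Spaces.linear_compose[OF lin_f L2.linear_br_left] by (simp_all add: comp_def)
  next
    fix u v assume "u \<in> b1 ` A" "v \<in> b1 ` A"
    then obtain i k where ik: "i \<in> A" "k \<in> A" and uv: "u = b1 i" "v = b1 k" by blast
    have "f (br1 u v) = (\<Sum>l\<in>A. sm2 (c i k l) (f (b1 l)))"
      unfolding uv br1_b1[OF ik] linear_sum[OF lin_f] linear_scale[OF lin_f] ..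
    also have "\<dots> = (\<Sum>l\<in>A. sm2 (c i k l) (b2 l))"
      by (rule sum.cong) (simp_all add: f_b1)
    also have "\<dots> = br2 (f u) (f v)"
      unfolding uv f_b1[OF ik(1)] f_b1[OF ik(2)] br2_b2[OF ik] ..
    finally show "f (br1 u v) = br2 (f u) (f v)" .
  qed
  with lin_f \<open>bij f\<close> show ?thesis
    unfolding lie_iso_def by blast
qed

section \<open>The Heisenberg algebra in coordinates\<close>

definition vscale :: "complex \<Rightarrow> (nat \<Rightarrow> complex) \<Rightarrow> nat \<Rightarrow> complex" where
  "vscale c u = (\<lambda>i. c * u i)"

definition unit_vec :: "nat \<Rightarrow> nat \<Rightarrow> complex" where
  "unit_vec k = (\<lambda>i. if i = k then 1 else 0)"

definition heis_form :: "nat \<Rightarrow> (nat \<Rightarrow> complex) \<Rightarrow> (nat \<Rightarrow> complex) \<Rightarrow> complex" where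
  "heis_form p u v = (\<Sum>l\<in>{1..p}. u (2*l-1) * v (2*l) - u (2*l) * v (2*l-1))"

definition symp_std :: "nat \<Rightarrow> nat \<Rightarrow> complex" where
  "symp_std a b = (if odd a \<and> b = a + 1 then 1 else if odd b \<and> a = b + 1 then -1 else 0)"

lemma vscale_apply: "vscale c u i = c * u i"
  by (simp add: vscale_def)

lemma vscale_zero_left [simp]: "vscale 0 u = 0"
  and vscale_zero_right [simp]: "vscale c 0 = 0"
  by (simp_all add: vscale_def zero_fun_def)

lemma heis_br_eq: "heis_br p u v = vscale (heis_form p u v) (unit_vec (2*p+1))"
  by (auto simp: heis_br_def heis_form_def unit_vec_def vscale_apply fun_eq_iff)

lemma heis_form_add_left [simp]: "heis_form p (u + v) w = heis_form p u w + heis_form p v w"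
  and heis_form_add_right [simp]: "heis_form p w (u + v) = heis_form p w u + heis_form p w v"
  and heis_form_vscale_left [simp]: "heis_form p (vscale c u) w = c * heis_form p u w"
  and heis_form_vscale_right [simp]: "heis_form p w (vscale c u) = c * heis_form p w u"
  and heis_form_zero_right [simp]: "heis_form p w 0 = 0"
  by (simp_all add: heis_form_def vscale_apply sum.distrib[symmetric] sum_distrib_left algebra_simps)

lemma heis_form_swap: "heis_form p u v = - heis_form p v u"
  by (simp add: heis_form_def sum_negf[symmetric] algebra_simps)

lemma heis_form_self [simp]: "heis_form p u u = 0"
  using heis_form_swap[of p u u] by simp

lemma heis_form_sum_right:
  "heis_form p u (\<Sum>i\<in>A. vscale (c i) (w i)) = (\<Sum>i\<in>A. c i * heis_form p u (w i))"
  by (induction A rule: infinite_finite_induct) (simp_all del: plus_fun_apply zero_fun_apply)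

lemma sum_fun_apply: "(\<Sum>i\<in>A. f i) x = (\<Sum>i\<in>A. f i x)"
  by (induction A rule: infinite_finite_induct) simp_all

lemma heis_form_unit_vec_right:
  assumes "k \<in> {1..2*p}"
  shows "heis_form p u (unit_vec k) = (if even k then u (k - 1) else - u (k + 1))"
proof (cases "even k")
  case True
  then obtain l where l: "k = 2*l" by blast
  with assms have "l \<in> {1..p}" by auto
  moreover have "heis_form p u (unit_vec k) = (\<Sum>l'\<in>{1..p}. if l' = l then u (2*l'-1) else 0)"
    unfolding heis_form_def unit_vec_def by (rule sum.cong) (auto simp: l)
  ultimately show ?thesis using True l by simp
next
  case False
  then obtain l0 where "k = 2*l0 + 1" by (blast elim: oddE)
  then obtain l where l: "k = 2*l - 1" "l \<ge> 1" by (intro that[of "l0 + 1"]) auto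
  with assms have "l \<in> {1..p}" by auto
  moreover have "heis_form p u (unit_vec k) = (\<Sum>l'\<in>{1..p}. if l' = l then - u (2*l') else 0)"
    unfolding heis_form_def unit_vec_def by (rule sum.cong) (auto simp: l)
  ultimately show ?thesis using False l by simp
qed

lemma heis_form_unit_vec_right_outside: "k \<notin> {1..2*p} \<Longrightarrow> heis_form p u (unit_vec k) = 0"
  unfolding heis_form_def unit_vec_def by (intro sum.neutral) auto

lemma heis_form_unit_vec_left_outside: "k \<notin> {1..2*p} \<Longrightarrow> heis_form p (unit_vec k) u = 0"
  using heis_form_unit_vec_right_outside heis_form_swap by (metis neg_0_equal_iff_equal)

lemma heis_form_unit_vecs:
  assumes "a \<le> 2*p+1" "b \<le> 2*p+1"
  shows "heis_form p (unit_vec a) (unit_vec b) = symp_std a b"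
proof (cases "b \<in> {1..2*p}")
  case True
  then show ?thesis
    using heis_form_unit_vec_right[OF True] by (auto simp: unit_vec_def symp_std_def)
next
  case False
  then show ?thesis
    using heis_form_unit_vec_right_outside[OF False] assms by (auto simp: symp_std_def; presburger)
qed

lemma heis_carrier_add [simp]: "u \<in> heis_carrier p \<Longrightarrow> v \<in> heis_carrier p \<Longrightarrow> u + v \<in> heis_carrier p"
  and heis_carrier_vscale [simp]: "u \<in> heis_carrier p \<Longrightarrow> vscale c u \<in> heis_carrier p"
  and heis_carrier_unit_vec [simp]: "k \<in> {1..2*p+1} \<Longrightarrow> unit_vec k \<in> heis_carrier p"
  and heis_carrier_heis_br [simp]: "heis_br p u v \<in> heis_carrier p"
  and heis_carrier_zero [simp]: "0 \<in> heis_carrier p"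
  by (auto simp: heis_carrier_def unit_vec_def heis_br_def vscale_apply)

lemma heis_carrier_expansion:
  fixes F :: "(nat \<Rightarrow> complex) \<Rightarrow> 'b::ab_group_add" and sc :: "complex \<Rightarrow> 'b \<Rightarrow> 'b"
  assumes add: "\<And>u v. u \<in> heis_carrier p \<Longrightarrow> v \<in> heis_carrier p \<Longrightarrow> F (u + v) = F u + F v"
    and scale: "\<And>c u. u \<in> heis_carrier p \<Longrightarrow> F (vscale c u) = sc c (F u)"
    and zero: "F 0 = 0"
    and h: "h \<in> heis_carrier p"
  shows "F h = (\<Sum>k\<in>{1..2*p+1}. sc (h k) (F (unit_vec k)))"
proof -
  define restr where "restr K = (\<lambda>i. if i \<in> K then h i else 0)" for K
  have "F (restr K) = (\<Sum>k\<in>K. sc (h k) (F (unit_vec k)))" if "K \<subseteq> {1..2*p+1}" for K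
    using that
  proof (induction K rule: infinite_finite_induct)
    case (infinite K)
    then show ?case using finite_subset by blast
  next
    case empty
    then show ?case using zero by (simp add: restr_def zero_fun_def)
  next
    case (insert k K)
    have "restr (insert k K) = vscale (h k) (unit_vec k) + restr K"
      using insert by (auto simp: restr_def unit_vec_def vscale_apply fun_eq_iff)
    moreover have "restr K \<in> heis_carrier p"
      using insert by (auto simp: restr_def heis_carrier_def)
    ultimately show ?case
      using insert by (simp del: plus_fun_apply add: add scale)
  qed
  moreover have "restr {1..2*p+1} = h"
    using h by (auto simp: restr_def heis_carrier_def fun_eq_iff)
  ultimately show ?thesis by (metis order_refl)
qed

section \<open>Index bookkeeping for symplectic bases\<close>

lemma symp_std_eq_pairs:
  "symp_std a b = (if (a+1) div 2 = (b+1) div 2 \<and> odd a \<and> even b then 1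
     else if (a+1) div 2 = (b+1) div 2 \<and> even a \<and> odd b then -1 else 0)"
proof -
  have "(odd a \<and> b = a+1) \<longleftrightarrow> ((a+1) div 2 = (b+1) div 2 \<and> odd a \<and> even b)"
    and "(odd b \<and> a = b+1) \<longleftrightarrow> ((a+1) div 2 = (b+1) div 2 \<and> even a \<and> odd b)"
    by (auto elim!: oddE evenE; presburger)+
  then show ?thesis unfolding symp_std_def by presburger
qed

lemma symp_std_self [simp]: "symp_std k k = 0"
  by (simp add: symp_std_def)

lemma symp_std_first_pair: "symp_std 1 2 = 1" "symp_std 2 1 = -1"
  and symp_std_first_pair_other:
    "k \<ge> 3 \<Longrightarrow> symp_std 1 k = 0" "k \<ge> 3 \<Longrightarrow> symp_std k 1 = 0"
    "k \<ge> 3 \<Longrightarrow> symp_std 2 k = 0" "k \<ge> 3 \<Longrightarrow> symp_std k 2 = 0"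
  by (auto simp: symp_std_def)

lemma symp_std_last:
  assumes "k \<le> 2*p+1"
  shows "symp_std k (2*p+1) = 0" "symp_std (2*p+1) k = 0"
proof -
  have "\<not> (odd k \<and> 2*p+1 = k+1)" "k \<noteq> 2*p+1+1"
    using assms by presburger+
  then show "symp_std k (2*p+1) = 0" "symp_std (2*p+1) k = 0"
    unfolding symp_std_def by auto
qed

text \<open>For \<open>k \<in> {3..2p}\<close>, \<open>skip_pair l k\<close> runs through the indices of all pairs except the
  \<open>l\<close>-th one, preserving parity and pairing: the \<open>l\<close>-th pair is renamed to the first.\<close>

definition skip_pair :: "nat \<Rightarrow> nat \<Rightarrow> nat" where
  "skip_pair l k = (if (k + 1) div 2 = l then k + 2 - 2*l else k)"

lemma pair_cases: "((k::nat) + 1) div 2 = l \<Longrightarrow> k = 2*l - 1 \<and> odd k \<or> k = 2*l \<and> even k"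
  by (auto elim!: oddE evenE)

lemma pair_skip_pair:
  "k \<ge> 3 \<Longrightarrow> (skip_pair l k + 1) div 2 = (if (k + 1) div 2 = l then 1 else (k + 1) div 2)"
  unfolding skip_pair_def by (auto dest!: pair_cases)

lemma even_skip_pair: "k \<ge> 3 \<Longrightarrow> even (skip_pair l k) \<longleftrightarrow> even k"
  unfolding skip_pair_def by (auto dest!: pair_cases)

lemma skip_pair_pos: "k \<ge> 3 \<Longrightarrow> skip_pair l k \<ge> 1"
  unfolding skip_pair_def by (auto dest!: pair_cases)

lemma skip_pair_range:
  assumes "l \<in> {1..p}" "k \<in> {3..2*p}"
  shows "skip_pair l k \<in> {1..2*p}"
proof (cases "(k + 1) div 2 = l")
  case True
  then have "k + 2 - 2*l = 1 \<or> k + 2 - 2*l = 2" by (auto dest!: pair_cases)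
  then show ?thesis using True assms(1) by (auto simp: skip_pair_def)
qed (use assms in \<open>auto simp: skip_pair_def\<close>)

lemma symp_std_skip_pair:
  assumes "j \<ge> 1" "k \<ge> 3"
  shows "symp_std (skip_pair ((j + 1) div 2) k) j = 0"
    and "symp_std j (skip_pair ((j + 1) div 2) k) = 0"
proof -
  have "(k + 1) div 2 \<ge> 2" using assms(2) by simp
  then have "(skip_pair ((j + 1) div 2) k + 1) div 2 \<noteq> (j + 1) div 2"
    unfolding pair_skip_pair[OF assms(2)] by simp
  then show "symp_std (skip_pair ((j + 1) div 2) k) j = 0"
    and "symp_std j (skip_pair ((j + 1) div 2) k) = 0"
    using assms skip_pair_pos[OF assms(2)] by (simp_all add: symp_std_eq_pairs)
qed

lemma symp_std_skip_pairs:
  assumes "k \<ge> 3" "k' \<ge> 3"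
  shows "symp_std (skip_pair l k) (skip_pair l k') = symp_std k k'"
proof -
  have "(k + 1) div 2 \<ge> 2" "(k' + 1) div 2 \<ge> 2" using assms by simp_all
  then have same_pair: "(skip_pair l k + 1) div 2 = (skip_pair l k' + 1) div 2
      \<longleftrightarrow> (k + 1) div 2 = (k' + 1) div 2"
    unfolding pair_skip_pair[OF assms(1)] pair_skip_pair[OF assms(2)] by auto
  show ?thesis
    unfolding symp_std_eq_pairs[of "skip_pair l k"] symp_std_eq_pairs[of k] same_pair
      even_skip_pair[OF assms(1)] even_skip_pair[OF assms(2)] ..
qed

definition partner :: "nat \<Rightarrow> nat" where
  "partner k = (if odd k then k + 1 else k - 1)"

lemma partner_range: "k \<in> {1..2*p} \<Longrightarrow> partner k \<in> {1..2*p}"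
  by (auto simp: partner_def elim!: oddE evenE; presburger)

lemma symp_std_partner:
  assumes "k \<ge> 1"
  shows "symp_std (partner k) i \<noteq> 0 \<longleftrightarrow> i = k"
proof (cases "odd k")
  case True
  then show ?thesis by (auto simp: partner_def symp_std_def)
next
  case False
  then have "odd (k - 1)" "k - 1 + 1 = k" using assms by (auto elim!: evenE)
  then show ?thesis using False by (auto simp: partner_def symp_std_def)
qed

text \<open>Structure constants of the normal form; index \<open>0\<close> stands for \<open>y\<close>.\<close>

definition str_const :: "nat \<Rightarrow> nat \<Rightarrow> nat \<Rightarrow> nat \<Rightarrow> complex" where
  "str_const p i k l = (if l = 0 then (if i = 1 \<and> k = 0 then 1 else if i = 0 \<and> k = 1 then -1 else 0)
     else if l = 2*p+1 then symp_std i k else 0)"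

section \<open>\<open>H\<^sub>p\<close>-\<open>A(1)\<close> algebras\<close>

text \<open>That \<open>NP(L)\<close> is abelian, which \<open>HpA\<close> also requires, is
  automatic for a line and not assumed.\<close>

locale HpA1_algebra = complex_lie_algebra sm br
  for sm :: "complex \<Rightarrow> 'a::ab_group_add \<Rightarrow> 'a" and br +
  fixes p :: nat and \<phi> :: "'a \<Rightarrow> nat \<Rightarrow> complex"
  assumes p_pos: "1 \<le> p"
    and phi_add: "\<phi> (u + v) = \<phi> u + \<phi> v"
    and phi_scale: "\<phi> (sm c u) = vscale c (\<phi> u)"
    and phi_br: "\<phi> (br u v) = heis_br p (\<phi> u) (\<phi> v)"
    and phi_range: "range \<phi> = heis_carrier p"
    and phi_kernel: "{u. \<phi> u = 0} = NP sm br"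
    and dim_NP: "dim (NP sm br) = 1"
begin

lemma phi_zero [simp]: "\<phi> 0 = 0"
  using phi_scale[of 0 0] by (simp add: vscale_def zero_fun_def)

lemma phi_diff: "\<phi> (u - v) = \<phi> u - \<phi> v"
  using phi_add[of "u - v" v] by (simp add: eq_diff_eq)

lemma phi_sum: "\<phi> (\<Sum>i\<in>A. sm (c i) (w i)) = (\<Sum>i\<in>A. vscale (c i) (\<phi> (w i)))"
  by (induction A rule: infinite_finite_induct) (simp_all add: phi_add phi_scale)

lemma phi_in_heis_carrier [simp]: "\<phi> u \<in> heis_carrier p"
  using phi_range by blast

lemma mem_NP: "u \<in> NP sm br \<longleftrightarrow> \<phi> u = 0"
  using phi_kernel by blast

lemma subspace_NP: "subspace (NP sm br)"
  by (rule subspaceI) (auto simp: mem_NP phi_add phi_scale vscale_def zero_fun_def)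

lemma NP_line: "\<exists>y. y \<noteq> 0 \<and> NP sm br = span {y}"
proof -
  obtain B where B: "B \<subseteq> NP sm br" "independent B" "NP sm br \<subseteq> span B" "card B = 1"
    using basis_exists[of "NP sm br"] dim_NP by metis
  then obtain y where "B = {y}" by (meson card_1_singletonE)
  with B subspace_NP show ?thesis
    by (metis dependent_single span_minimal subset_antisym)
qed

definition y where "y = (SOME y. y \<noteq> 0 \<and> NP sm br = span {y})"

lemma y_nonzero [simp]: "y \<noteq> 0" and NP_eq_span_y: "NP sm br = span {y}"
  using someI_ex[OF NP_line] unfolding y_def by auto

lemma mem_NP_iff: "u \<in> NP sm br \<longleftrightarrow> (\<exists>c. u = sm c y)"
  using NP_eq_span_y span_singleton by auto

lemma phi_y [simp]: "\<phi> y = 0"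
  using mem_NP_iff[of y] mem_NP by (metis scale_one)

definition weight where "weight u = (SOME c. br u y = sm c y)"

lemma br_y: "br u y = sm (weight u) y"
proof -
  have "br u y \<in> NP sm br"
    by (simp add: mem_NP phi_br heis_br_eq)
  then show ?thesis
    unfolding weight_def mem_NP_iff by (rule someI_ex)
qed

lemma weight_unique: "br u y = sm c y \<Longrightarrow> weight u = c"
  using br_y[of u] by simp

lemma weight_add: "weight (u + v) = weight u + weight v"
  by (rule weight_unique) (subst br_add_left, simp add: br_y scale_left_distrib)

lemma weight_scale: "weight (sm c u) = c * weight u"
  by (rule weight_unique) (subst br_scale_left, simp add: br_y)

lemma weight_diff: "weight (u - v) = weight u - weight v"
  using weight_add[of "u - v" v] by simp

lemma weight_zero [simp]: "weight 0 = 0"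
  using weight_diff[of 0 0] by simp

lemma weight_br [simp]: "weight (br u v) = 0"
proof (rule weight_unique)
  have "br (br u v) y = - (br (br y u) v + br u (br y v))"
    using br_anticomm[of "br u v" y] br_derivation[of y u v] by simp
  also have "\<dots> = 0"
    by (simp add: br_anticomm[of y u] br_anticomm[of y v] br_y mult.commute)
  finally show "br (br u v) y = sm 0 y" by simp
qed

lemma weight_NP: "u \<in> NP sm br \<Longrightarrow> weight u = 0"
  using mem_NP_iff weight_scale weight_unique by fastforce

lemma lcs_1_central: "lcs sm br 1 \<subseteq> {w. \<forall>i. i \<noteq> 2*p+1 \<longrightarrow> \<phi> w i = 0}"
proof -
  have "subspace {w. \<forall>i. i \<noteq> 2*p+1 \<longrightarrow> \<phi> w i = 0}"
    by (rule subspaceI) (auto simp: phi_add phi_scale vscale_def)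
  moreover have "{br x w | x w. w \<in> lcs sm br 0} \<subseteq> {w. \<forall>i. i \<noteq> 2*p+1 \<longrightarrow> \<phi> w i = 0}"
    by (auto simp: phi_br heis_br_def)
  ultimately show ?thesis by (simp add: span_minimal)
qed

lemma lcs_2_NP: "lcs sm br 2 \<subseteq> NP sm br"
proof -
  have "br x w \<in> NP sm br" if "w \<in> lcs sm br 1" for x w
  proof -
    have "\<forall>i. i \<noteq> 2*p+1 \<longrightarrow> \<phi> w i = 0"
      using lcs_1_central that by blast
    then have "heis_form p (\<phi> x) (\<phi> w) = 0"
      unfolding heis_form_def by (intro sum.neutral) auto
    then show ?thesis by (simp add: mem_NP phi_br heis_br_eq)
  qed
  then have "{br x w | x w. w \<in> lcs sm br 1} \<subseteq> NP sm br"
    by blast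
  then show ?thesis
    unfolding Suc_1[symmetric] lcs.simps(2) using subspace_NP by (rule span_minimal)
qed

lemma exists_weight_one: "\<exists>a. weight a = 1"
proof (rule ccontr)
  assume no_one: "\<nexists>a. weight a = 1"
  have all_weights_zero: "weight x = 0" for x
  proof (rule ccontr)
    assume "weight x \<noteq> 0"
    then have "weight (sm (1 / weight x) x) = 1" by (simp add: weight_scale)
    with no_one show False by blast
  qed
  have "{br x w | x w. w \<in> lcs sm br 2} \<subseteq> {0}"
  proof clarify
    fix x w assume "w \<in> lcs sm br 2"
    then obtain c where "w = sm c y" using lcs_2_NP mem_NP_iff by blast
    then show "br x w = 0" by (simp add: br_y all_weights_zero)
  qed
  then have "lcs sm br (Suc 2) \<subseteq> {0}"
    unfolding lcs.simps(2) by (rule span_minimal) (rule subspace_single_0)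
  moreover have "y \<in> NP sm br"
    by (simp add: NP_eq_span_y span_base)
  then have "y \<in> lcs sm br (Suc 2)"
    unfolding NP_def by blast
  ultimately show False by auto
qed

definition a where "a = (SOME a. weight a = 1)"

lemma br_a_y [simp]: "br a y = y"
  using br_y[of a] someI_ex[OF exists_weight_one] unfolding a_def by simp

definition proj where "proj u = br a (br a u)"

lemma proj_in_NP: "proj u \<in> NP sm br"
proof -
  have "heis_form p (\<phi> a) (unit_vec (2*p+1)) = 0"
    by (rule heis_form_unit_vec_right_outside) auto
  then show ?thesis
    by (simp add: proj_def mem_NP phi_br heis_br_eq)
qed

lemma br_a_fixes_NP: "u \<in> NP sm br \<Longrightarrow> br a u = u"
  by (auto simp: mem_NP_iff)

lemma proj_fixes_NP: "u \<in> NP sm br \<Longrightarrow> proj u = u"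
  by (simp add: proj_def br_a_fixes_NP)

lemma proj_idem [simp]: "proj (proj u) = proj u"
  using proj_fixes_NP proj_in_NP by blast

lemma proj_zero [simp]: "proj 0 = 0"
  by (simp add: proj_def)

lemma proj_add: "proj (u + v) = proj u + proj v"
  and proj_scale: "proj (sm c u) = sm c (proj u)"
  and proj_diff: "proj (u - v) = proj u - proj v"
  by (simp_all add: proj_def br_add_right br_diff_right)

lemma proj_br:
  assumes "proj u = 0" "proj v = 0"
  shows "proj (br u v) = 0"
proof -
  have "proj (br u v) = br (br a u) (br a v) + br (br a u) (br a v)"
    using assms unfolding proj_def br_derivation[of a u v] br_add_right
      br_derivation[of a "br a u" v] br_derivation[of a u "br a v"] by simp
  moreover have "br a (br (br a u) (br a v)) = 0"
    using assms unfolding proj_def br_derivation[of a "br a u" "br a v"] by simp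
  ultimately have "br a (proj (br u v)) = 0"
    by (simp add: br_add_right)
  moreover have "br a (proj (br u v)) = proj (br u v)"
    by (rule br_a_fixes_NP[OF proj_in_NP])
  ultimately show ?thesis by simp
qed

lemma eq_if_proj_zero:
  assumes "proj u = 0" "proj v = 0" "\<phi> u = \<phi> v"
  shows "u = v"
proof -
  have "u - v \<in> NP sm br"
    using assms(3) by (simp add: mem_NP phi_diff)
  then have "u - v = proj (u - v)"
    by (simp add: proj_fixes_NP)
  also have "\<dots> = 0"
    using assms(1,2) by (simp add: proj_diff)
  finally show ?thesis by simp
qed

definition sect where "sect h = (let u = (SOME u. \<phi> u = h) in u - proj u)"

lemma proj_sect: "proj (sect h) = 0"
  by (simp add: sect_def Let_def proj_diff)

lemma phi_sect:
  assumes "h \<in> heis_carrier p"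
  shows "\<phi> (sect h) = h"
proof -
  obtain u where "\<phi> u = h"
    using assms unfolding phi_range[symmetric] by blast
  then have "\<phi> (SOME u. \<phi> u = h) = h"
    by (rule someI)
  then show ?thesis
    using proj_in_NP by (simp add: sect_def Let_def phi_diff mem_NP)
qed

lemma sect_add: "g \<in> heis_carrier p \<Longrightarrow> h \<in> heis_carrier p \<Longrightarrow> sect (g + h) = sect g + sect h"
  by (rule eq_if_proj_zero) (simp_all add: proj_sect phi_sect phi_add proj_add)

lemma sect_scale: "h \<in> heis_carrier p \<Longrightarrow> sect (vscale c h) = sm c (sect h)"
  by (rule eq_if_proj_zero) (simp_all add: proj_sect phi_sect phi_scale proj_scale)

lemma sect_heis_br:
  "g \<in> heis_carrier p \<Longrightarrow> h \<in> heis_carrier p \<Longrightarrow> sect (heis_br p g h) = br (sect g) (sect h)"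
  by (rule eq_if_proj_zero) (simp_all add: proj_sect phi_sect phi_br proj_br)

lemma sect_zero: "sect 0 = 0"
  by (rule eq_if_proj_zero) (simp_all add: proj_sect phi_sect)

definition \<mu> where "\<mu> k = weight (sect (unit_vec k))"

lemma weight_sect_expansion:
  "h \<in> heis_carrier p \<Longrightarrow> weight (sect h) = (\<Sum>k\<in>{1..2*p+1}. h k * \<mu> k)"
  unfolding \<mu>_def
  by (rule heis_carrier_expansion[where F = "\<lambda>h. weight (sect h)"])
     (simp_all add: sect_add sect_scale sect_zero weight_add weight_scale)

lemma weight_sect_phi: "weight (sect (\<phi> u)) = weight u"
proof -
  have "u - sect (\<phi> u) \<in> NP sm br"
    by (simp add: mem_NP phi_diff phi_sect)
  then show ?thesis
    using weight_NP weight_diff by fastforce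
qed

lemma unit_vec_top_eq_heis_br: "unit_vec (2*p+1) = heis_br p (unit_vec 1) (unit_vec 2)"
proof -
  have "heis_form p (unit_vec 1) (unit_vec 2) = 1"
    using p_pos heis_form_unit_vecs[of 1 p 2] by (simp add: symp_std_def)
  then show ?thesis
    by (simp add: heis_br_eq vscale_def)
qed

lemma \<mu>_top: "\<mu> (2*p+1) = 0"
  unfolding \<mu>_def unit_vec_top_eq_heis_br using p_pos by (simp add: sect_heis_br)

lemma exists_\<mu>_nonzero: "\<exists>j\<in>{1..2*p}. \<mu> j \<noteq> 0"
proof (rule ccontr)
  assume no_j: "\<not> ?thesis"
  have "\<mu> k = 0" if "k \<in> {1..2*p+1}" for k
  proof (cases "k = 2*p+1")
    case True
    with \<mu>_top show ?thesis by simp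
  next
    case False
    with that no_j show ?thesis by auto
  qed
  then have "weight (sect (\<phi> a)) = 0"
    by (simp add: weight_sect_expansion)
  moreover have "weight a = 1"
    unfolding a_def using exists_weight_one by (rule someI_ex)
  ultimately show False
    by (simp add: weight_sect_phi)
qed

definition weight_dual where
  "weight_dual i = (if i \<in> {1..2*p} then (if odd i then \<mu> (i + 1) else - \<mu> (i - 1)) else 0)"

lemma weight_dual_heis_carrier [simp]: "weight_dual \<in> heis_carrier p"
  by (auto simp: weight_dual_def heis_carrier_def)

lemma heis_form_weight_dual_unit_vec:
  assumes "k \<in> {1..2*p+1}"
  shows "heis_form p weight_dual (unit_vec k) = \<mu> k"
proof (cases "k = 2*p+1")
  case True
  with \<mu>_top show ?thesis by (simp add: heis_form_unit_vec_right_outside)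
next
  case False
  then have k: "k \<in> {1..2*p}" using assms by auto
  show ?thesis
  proof (cases "even k")
    case True
    then have "k \<noteq> 1" by auto
    then have "k - 1 \<in> {1..2*p}" "odd (k - 1)" "k - 1 + 1 = k"
      using k True by (auto elim!: evenE)
    then show ?thesis
      using heis_form_unit_vec_right[OF k] True by (simp add: weight_dual_def)
  next
    case False
    then have "k \<noteq> 2*p" by auto
    then have "k + 1 \<in> {1..2*p}" "even (k + 1)"
      using k False by auto
    then show ?thesis
      using heis_form_unit_vec_right[OF k] False by (simp add: weight_dual_def)
  qed
qed

lemma weight_sect:
  assumes "h \<in> heis_carrier p"
  shows "weight (sect h) = heis_form p weight_dual h"
proof -
  have "heis_form p weight_dual h
      = (\<Sum>k\<in>{1..2*p+1}. h k * heis_form p weight_dual (unit_vec k))"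
    by (rule heis_carrier_expansion[where F = "heis_form p weight_dual"]) (simp_all add: assms)
  also have "\<dots> = (\<Sum>k\<in>{1..2*p+1}. h k * \<mu> k)"
    by (rule sum.cong) (simp_all add: heis_form_weight_dual_unit_vec)
  finally show ?thesis
    by (simp add: weight_sect_expansion assms)
qed

definition pivot where "pivot = (SOME j. j \<in> {1..2*p} \<and> \<mu> j \<noteq> 0)"

lemma pivot_range: "pivot \<in> {1..2*p}" and \<mu>_pivot: "\<mu> pivot \<noteq> 0"
  using someI_ex[OF exists_\<mu>_nonzero[unfolded Bex_def]] unfolding pivot_def by auto

text \<open>For \<open>k \<ge> 3\<close>, the unit vectors of the pairs other than that of \<open>pivot\<close> are corrected by a
  multiple of \<open>unit_vec pivot\<close> so that they get weight \<open>0\<close>.\<close>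

definition hbasis where
  "hbasis k = (if k = 1 then vscale (1 / \<mu> pivot) (unit_vec pivot)
     else if k = 2 then vscale (-1) weight_dual
     else if k = 2*p+1 then unit_vec (2*p+1)
     else unit_vec (skip_pair ((pivot + 1) div 2) k)
       + vscale (- \<mu> (skip_pair ((pivot + 1) div 2) k) / \<mu> pivot) (unit_vec pivot))"

lemma hbasis_1: "hbasis 1 = vscale (1 / \<mu> pivot) (unit_vec pivot)"
  and hbasis_2: "hbasis 2 = vscale (-1) weight_dual"
  and hbasis_top: "hbasis (2*p+1) = unit_vec (2*p+1)"
  and hbasis_mid: "k \<in> {3..2*p} \<Longrightarrow> hbasis k = unit_vec (skip_pair ((pivot + 1) div 2) k)
       + vscale (- \<mu> (skip_pair ((pivot + 1) div 2) k) / \<mu> pivot) (unit_vec pivot)"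
  using p_pos by (simp_all add: hbasis_def)

lemma index_cases: "q \<in> {1..2*p+1} \<Longrightarrow> q = 1 \<or> q = 2 \<or> q = 2*p+1 \<or> q \<in> {3..2*p}"
  using p_pos by auto

lemma pair_pivot_range: "(pivot + 1) div 2 \<in> {1..p}"
  using pivot_range by auto

lemma hbasis_heis_carrier [simp]: "q \<in> {1..2*p+1} \<Longrightarrow> hbasis q \<in> heis_carrier p"
  using index_cases[of q] pivot_range skip_pair_range[OF pair_pivot_range, of q]
    hbasis_1 hbasis_2 hbasis_top hbasis_mid[of q]
  by auto

lemma heis_form_unit_vec_weight_dual:
  "k \<in> {1..2*p+1} \<Longrightarrow> heis_form p (unit_vec k) weight_dual = - \<mu> k"
  using heis_form_weight_dual_unit_vec heis_form_swap by (metis minus_minus)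

lemma heis_form_hbasis:
  assumes "q \<in> {1..2*p+1}" "r \<in> {1..2*p+1}"
  shows "heis_form p (hbasis q) (hbasis r) = symp_std q r"
  using index_cases[OF assms(1)] index_cases[OF assms(2)] pivot_range \<mu>_pivot
    hbasis_1 hbasis_2 hbasis_top hbasis_mid[of q] hbasis_mid[of r]
    heis_form_unit_vecs[of _ p] heis_form_weight_dual_unit_vec heis_form_unit_vec_weight_dual
    heis_form_unit_vec_left_outside heis_form_unit_vec_right_outside
    skip_pair_range[OF pair_pivot_range, of q] skip_pair_range[OF pair_pivot_range, of r]
    symp_std_skip_pair[of pivot q] symp_std_skip_pair[of pivot r] symp_std_skip_pairs[of q r]
    symp_std_first_pair symp_std_first_pair_other symp_std_last[of _ p]
  by auto

lemma weight_sect_hbasis: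
  assumes "q \<in> {1..2*p+1}"
  shows "weight (sect (hbasis q)) = (if q = 1 then 1 else 0)"
  unfolding weight_sect[OF hbasis_heis_carrier[OF assms]]
  using index_cases[OF assms] pivot_range \<mu>_pivot \<mu>_top hbasis_1 hbasis_2 hbasis_top hbasis_mid[of q]
    heis_form_weight_dual_unit_vec skip_pair_range[OF pair_pivot_range, of q]
  by auto

lemma hbasis_last_coord:
  assumes "q \<in> {1..2*p+1}"
  shows "hbasis q (2*p+1) = (if q = 2*p+1 then 1 else 0)"
  using index_cases[OF assms] pivot_range skip_pair_range[OF pair_pivot_range, of q]
    hbasis_1 hbasis_2 hbasis_top hbasis_mid[of q]
  by (auto simp: vscale_apply unit_vec_def weight_dual_def)

lemma hbasis_coeffs_zero:
  assumes "(\<Sum>i\<in>{1..2*p+1}. vscale (c i) (hbasis i)) = 0"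
  shows "\<forall>i\<in>{1..2*p+1}. c i = 0"
proof -
  have "c k = 0" if k: "k \<in> {1..2*p}" for k
  proof -
    have "0 = heis_form p (hbasis (partner k)) (\<Sum>i\<in>{1..2*p+1}. vscale (c i) (hbasis i))"
      by (simp only: assms heis_form_zero_right)
    also have "\<dots> = (\<Sum>i\<in>{1..2*p+1}. c i * symp_std (partner k) i)"
      unfolding heis_form_sum_right using partner_range[OF k]
      by (intro sum.cong) (simp_all add: heis_form_hbasis)
    also have "\<dots> = (\<Sum>i\<in>{1..2*p+1}. if i = k then c k * symp_std (partner k) k else 0)"
      using k symp_std_partner[of k] by (intro sum.cong) auto
    also have "\<dots> = c k * symp_std (partner k) k"
      using k by simp
    finally show ?thesis
      using k symp_std_partner[of k k] by simp
  qed
  moreover have "c (2*p+1) = 0"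
  proof -
    have "0 = (\<Sum>i\<in>{1..2*p+1}. c i * hbasis i (2*p+1))"
      using fun_cong[OF assms, of "2*p+1"] by (simp add: sum_fun_apply vscale_apply)
    also have "\<dots> = (\<Sum>i\<in>{1..2*p+1}. if i = 2*p+1 then c (2*p+1) else 0)"
      by (rule sum.cong) (use hbasis_last_coord in auto)
    finally show ?thesis by simp
  qed
  ultimately show ?thesis
    by (metis atLeastAtMost_iff le_Suc_eq Suc_eq_plus1)
qed

definition nbasis where "nbasis k = (if k = 0 then y else sect (hbasis k))"

lemma nbasis_0: "nbasis 0 = y"
  and nbasis_pos: "q \<in> {1..2*p+1} \<Longrightarrow> nbasis q = sect (hbasis q)"
  by (simp_all add: nbasis_def)

lemma phi_nbasis: "q \<in> {1..2*p+1} \<Longrightarrow> \<phi> (nbasis q) = hbasis q"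
  by (simp add: nbasis_pos phi_sect)

lemma br_nbasis:
  assumes "q \<in> {1..2*p+1}" "r \<in> {1..2*p+1}"
  shows "br (nbasis q) (nbasis r) = sm (symp_std q r) (nbasis (2*p+1))"
proof -
  have "br (nbasis q) (nbasis r) = sect (heis_br p (hbasis q) (hbasis r))"
    using assms by (simp add: nbasis_pos sect_heis_br)
  also have "\<dots> = sect (vscale (symp_std q r) (hbasis (2*p+1)))"
    using assms hbasis_top by (simp add: heis_br_eq heis_form_hbasis)
  also have "\<dots> = sm (symp_std q r) (nbasis (2*p+1))"
    by (simp add: sect_scale nbasis_pos)
  finally show ?thesis .
qed

lemma br_nbasis_y: "q \<in> {1..2*p+1} \<Longrightarrow> br (nbasis q) y = sm (if q = 1 then 1 else 0) y"
  by (simp only: nbasis_pos br_y weight_sect_hbasis)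

lemma nbasis_coeffs_zero:
  assumes "(\<Sum>i\<in>{0..2*p+1}. sm (c i) (nbasis i)) = 0"
  shows "\<forall>i\<in>{0..2*p+1}. c i = 0"
proof -
  have split: "(\<Sum>i\<in>{0..2*p+1}. f i) = f 0 + (\<Sum>i\<in>{1..2*p+1}. f i)" for f :: "nat \<Rightarrow> 'b::comm_monoid_add"
    by (simp add: sum.atLeast_Suc_atMost add.assoc)
  have "(\<Sum>i\<in>{1..2*p+1}. vscale (c i) (hbasis i))
      = (\<Sum>i\<in>{1..2*p+1}. vscale (c i) (\<phi> (nbasis i)))"
    by (intro sum.cong) (simp_all add: phi_nbasis)
  also have "\<dots> = (\<Sum>i\<in>{0..2*p+1}. vscale (c i) (\<phi> (nbasis i)))"
    unfolding split by (simp add: nbasis_0)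
  also have "\<dots> = 0"
    unfolding phi_sum[symmetric] assms by simp
  finally have pos: "\<forall>i\<in>{1..2*p+1}. c i = 0"
    by (rule hbasis_coeffs_zero)
  then have "sm (c 0) y = 0"
    using assms unfolding split by (simp add: nbasis_0)
  with pos show ?thesis
    by (metis atLeastAtMost_iff le_0_eq not_less_eq_eq One_nat_def scale_eq_0_iff y_nonzero)
qed

lemma inj_on_nbasis: "inj_on nbasis {0..2*p+1}"
proof (rule inj_onI, rule ccontr)
  fix i k assume i: "i \<in> {0..2*p+1}" and k: "k \<in> {0..2*p+1}"
    and eq: "nbasis i = nbasis k" and "i \<noteq> k"
  define c where "c l = (if l = i then 1 else if l = k then -1 else (0::complex))" for l
  have "(\<Sum>l\<in>{0..2*p+1}. sm (c l) (nbasis l))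
      = (\<Sum>l\<in>{0..2*p+1}. (if l = i then nbasis i else 0) + (if l = k then - nbasis k else 0))"
    by (rule sum.cong) (auto simp: c_def \<open>i \<noteq> k\<close>)
  also have "\<dots> = 0"
    using i k eq by (simp add: sum.distrib)
  finally have "c i = 0"
    using nbasis_coeffs_zero i by blast
  then show False by (simp add: c_def)
qed

lemma independent_nbasis: "independent (nbasis ` {0..2*p+1})"
proof (rule independent_if_scalars_zero)
  fix c :: "'a \<Rightarrow> complex" and v
  assume sum_0: "(\<Sum>v\<in>nbasis ` {0..2*p+1}. sm (c v) v) = 0"
    and v: "v \<in> nbasis ` {0..2*p+1}"
  have "(\<Sum>i\<in>{0..2*p+1}. sm (c (nbasis i)) (nbasis i)) = 0"
    using sum_0 unfolding sum.reindex[OF inj_on_nbasis] comp_def .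
  then have "\<forall>i\<in>{0..2*p+1}. c (nbasis i) = 0"
    by (rule nbasis_coeffs_zero)
  with v show "c v = 0" by blast
qed simp

text \<open>The \<open>2p+2\<close> vectors \<open>y, sect (unit_vec k)\<close> span \<open>L\<close>, so the \<open>2p+2\<close> independent vectors
  \<open>nbasis k\<close> span it as well.\<close>

lemma span_sect_unit_vecs: "u \<in> span (insert y ((\<lambda>k. sect (unit_vec k)) ` {1..2*p+1}))"
proof -
  let ?W = "insert y ((\<lambda>k. sect (unit_vec k)) ` {1..2*p+1})"
  have "u - sect (\<phi> u) \<in> NP sm br"
    by (simp add: mem_NP phi_diff phi_sect)
  then have "u - sect (\<phi> u) \<in> span {y}"
    using NP_eq_span_y by simp
  then have "u - sect (\<phi> u) \<in> span ?W"
    using span_mono[of "{y}" ?W] by blast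
  moreover have "sect (\<phi> u) = (\<Sum>k\<in>{1..2*p+1}. sm (\<phi> u k) (sect (unit_vec k)))"
    by (rule heis_carrier_expansion[where F = sect]) (simp_all add: sect_add sect_scale sect_zero)
  moreover have "(\<Sum>k\<in>{1..2*p+1}. sm (\<phi> u k) (sect (unit_vec k))) \<in> span ?W"
    by (intro span_sum span_scale span_base) auto
  ultimately show ?thesis
    using span_add by (metis diff_add_cancel)
qed

lemma span_nbasis: "span (nbasis ` {0..2*p+1}) = UNIV"
proof (rule ccontr)
  let ?W = "insert y ((\<lambda>k. sect (unit_vec k)) ` {1..2*p+1})"
  let ?B = "nbasis ` {0..2*p+1}"
  assume "span ?B \<noteq> UNIV"
  then obtain u where u: "u \<notin> span ?B" by blast
  then have "independent (insert u ?B)"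
    using independent_nbasis by (rule independent_insertI)
  moreover have "insert u ?B \<subseteq> span ?W"
    using span_sect_unit_vecs by blast
  ultimately have "card (insert u ?B) \<le> card ?W"
    using independent_span_bound by simp
  also have "\<dots> \<le> 2*p+2"
    using card_insert_le_m1 card_image_le[of "{1..2*p+1}" "\<lambda>k. sect (unit_vec k)"]
    by (simp add: card_insert_if)
  also have "u \<notin> ?B"
    using u span_base by blast
  then have "2*p+2 < card (insert u ?B)"
    using card_image[OF inj_on_nbasis] by simp
  finally show False by simp
qed

lemma br_nbasis_str_const:
  assumes "i \<in> {0..2*p+1}" "k \<in> {0..2*p+1}"
  shows "br (nbasis i) (nbasis k) = (\<Sum>l\<in>{0..2*p+1}. sm (str_const p i k l) (nbasis l))"
proof -
  have "(\<Sum>l\<in>{0..2*p+1}. sm (str_const p i k l) (nbasis l))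
      = (\<Sum>l\<in>{0, 2*p+1}. sm (str_const p i k l) (nbasis l))"
    by (rule sum.mono_neutral_right) (auto simp: str_const_def)
  also have "\<dots> = sm (str_const p i k 0) y + sm (symp_std i k) (nbasis (2*p+1))"
    by (simp add: nbasis_0 str_const_def)
  finally have rhs: "(\<Sum>l\<in>{0..2*p+1}. sm (str_const p i k l) (nbasis l))
      = sm (str_const p i k 0) y + sm (symp_std i k) (nbasis (2*p+1))" .
  consider "i = 0" "k = 0" | "i = 0" "k \<in> {1..2*p+1}" | "i \<in> {1..2*p+1}" "k = 0"
    | "i \<in> {1..2*p+1}" "k \<in> {1..2*p+1}"
    using assms by fastforce
  then show ?thesis
  proof cases
    case 1
    then show ?thesis unfolding rhs by (simp add: nbasis_0 str_const_def symp_std_def)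
  next
    case 2
    then have "br (nbasis i) (nbasis k) = - sm (if k = 1 then 1 else 0) y"
      using br_anticomm br_nbasis_y nbasis_0 by metis
    with 2 show ?thesis unfolding rhs by (simp add: str_const_def symp_std_def)
  next
    case 3
    then show ?thesis unfolding rhs by (simp add: nbasis_0 br_nbasis_y str_const_def symp_std_def)
  next
    case 4
    then show ?thesis unfolding rhs by (simp add: br_nbasis str_const_def)
  qed
qed

lemma normal_form:
  "\<exists>(x :: nat \<Rightarrow> 'a) y.
     inj_on x {1..2*p+1} \<and> y \<notin> x ` {1..2*p+1}
   \<and> \<not> module.dependent sm (x ` {1..2*p+1} \<union> {y})
   \<and> module.span sm (x ` {1..2*p+1} \<union> {y}) = UNIV
   \<and> NP sm br = module.span sm {y}
   \<and> (\<forall>l\<in>{1..p}. br (x (2*l-1)) (x (2*l)) = x (2*p+1))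
   \<and> br (x 1) y = y
   \<and> (\<forall>i\<in>{2..2*p+1}. br (x i) y = 0)
   \<and> (\<forall>i j. 1 \<le> i \<and> i < j \<and> j \<le> 2*p+1 \<and> \<not> (\<exists>l\<in>{1..p}. i = 2*l-1 \<and> j = 2*l)
        \<longrightarrow> br (x i) (x j) = 0)"
proof (intro exI[of _ nbasis] exI[of _ y] conjI)
  have "{0..2*p+1} = insert 0 {1..2*p+1}"
    by auto
  then have basis_eq: "nbasis ` {1..2*p+1} \<union> {y} = nbasis ` {0..2*p+1}"
    by (simp add: nbasis_0)
  show "inj_on nbasis {1..2*p+1}"
    by (rule inj_on_subset[OF inj_on_nbasis]) auto
  show "y \<notin> nbasis ` {1..2*p+1}"
    using inj_on_nbasis nbasis_0 by (fastforce simp: inj_on_def)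
  show "\<not> dependent (nbasis ` {1..2*p+1} \<union> {y})"
    unfolding basis_eq by (rule independent_nbasis)
  show "span (nbasis ` {1..2*p+1} \<union> {y}) = UNIV"
    unfolding basis_eq by (rule span_nbasis)
  show "NP sm br = span {y}"
    by (rule NP_eq_span_y)
  show "\<forall>l\<in>{1..p}. br (nbasis (2*l-1)) (nbasis (2*l)) = nbasis (2*p+1)"
  proof
    fix l assume l: "l \<in> {1..p}"
    then have "l \<ge> 1" by simp
    then have "odd (2*l-1) \<and> 2*l = 2*l-1+1"
      by presburger
    then have "symp_std (2*l-1) (2*l) = 1"
      unfolding symp_std_def by simp
    moreover have "2*l-1 \<in> {1..2*p+1}" "2*l \<in> {1..2*p+1}"
      using l by auto
    ultimately show "br (nbasis (2*l-1)) (nbasis (2*l)) = nbasis (2*p+1)"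
      by (simp add: br_nbasis)
  qed
  show "br (nbasis 1) y = y"
    using br_nbasis_y[of 1] by simp
  show "\<forall>i\<in>{2..2*p+1}. br (nbasis i) y = 0"
    using br_nbasis_y by auto
  show "\<forall>i j. 1 \<le> i \<and> i < j \<and> j \<le> 2*p+1 \<and> \<not> (\<exists>l\<in>{1..p}. i = 2*l-1 \<and> j = 2*l)
      \<longrightarrow> br (nbasis i) (nbasis j) = 0"
  proof (intro allI impI)
    fix i j
    assume ij: "1 \<le> i \<and> i < j \<and> j \<le> 2*p+1 \<and> \<not> (\<exists>l\<in>{1..p}. i = 2*l-1 \<and> j = 2*l)"
    have "symp_std i j = 0"
    proof (rule ccontr)
      assume "symp_std i j \<noteq> 0"
      then have "odd i" "j = i + 1"
        using ij by (auto simp: symp_std_def split: if_splits)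
      then have "(i + 1) div 2 \<in> {1..p} \<and> i = 2 * ((i + 1) div 2) - 1 \<and> j = 2 * ((i + 1) div 2)"
        using ij by (auto elim!: oddE)
      with ij show False by blast
    qed
    with ij show "br (nbasis i) (nbasis j) = 0"
      by (simp add: br_nbasis)
  qed
qed

end

lemma HpA1_algebra_if_HpA:
  fixes sm :: "complex \<Rightarrow> 'a::ab_group_add \<Rightarrow> 'a"
  assumes "p \<ge> 1" "lie_algebra sm br" "HpA p 1 sm br"
  obtains \<phi> where "HpA1_algebra sm br p \<phi>"
proof -
  obtain \<phi> :: "'a \<Rightarrow> nat \<Rightarrow> complex" where
    "\<forall>u v. \<phi> (u + v) = (\<lambda>i. \<phi> u i + \<phi> v i)" "\<forall>c u. \<phi> (sm c u) = (\<lambda>i. c * \<phi> u i)"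
    "\<forall>u v. \<phi> (br u v) = heis_br p (\<phi> u) (\<phi> v)" "range \<phi> = heis_carrier p"
    "{u. \<phi> u = (\<lambda>_. 0)} = NP sm br" "vector_space.dim sm (NP sm br) = 1"
    using assms(3) unfolding HpA_def by blast
  then have "HpA1_algebra sm br p \<phi>"
    using assms(1,2)
    by (intro HpA1_algebra.intro HpA1_algebra_axioms.intro complex_lie_algebra.intro)
       (simp_all add: plus_fun_def vscale_def zero_fun_def)
  then show ?thesis by (rule that)
qed

lemma HpA1_structure_constants:
  fixes sm :: "complex \<Rightarrow> 'a::ab_group_add \<Rightarrow> 'a"
  assumes "p \<ge> 1" "lie_algebra sm br" "HpA p 1 sm br"
  shows "\<exists>b. inj_on b {0..2*p+1} \<and> \<not> module.dependent sm (b ` {0..2*p+1})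
    \<and> module.span sm (b ` {0..2*p+1}) = UNIV
    \<and> (\<forall>i\<in>{0..2*p+1}. \<forall>k\<in>{0..2*p+1}.
          br (b i) (b k) = (\<Sum>l\<in>{0..2*p+1}. sm (str_const p i k l) (b l)))"
proof -
  obtain \<phi> where "HpA1_algebra sm br p \<phi>"
    using HpA1_algebra_if_HpA[OF assms] .
  then interpret HpA1_algebra sm br p \<phi> .
  show ?thesis
    by (intro exI[of _ nbasis] conjI ballI inj_on_nbasis independent_nbasis span_nbasis
        br_nbasis_str_const)
qed

lemma HpA1_isomorphic:
  fixes sm1 :: "complex \<Rightarrow> 'a::ab_group_add \<Rightarrow> 'a" and sm2 :: "complex \<Rightarrow> 'b::ab_group_add \<Rightarrow> 'b"
  assumes "p \<ge> 1" "lie_algebra sm1 br1" "HpA p 1 sm1 br1" "lie_algebra sm2 br2" "HpA p 1 sm2 br2"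
  shows "\<exists>f. lie_iso sm1 br1 sm2 br2 f"
proof -
  obtain b1 where b1: "inj_on b1 {0..2*p+1}" "\<not> module.dependent sm1 (b1 ` {0..2*p+1})"
    "module.span sm1 (b1 ` {0..2*p+1}) = UNIV"
    "\<forall>i\<in>{0..2*p+1}. \<forall>k\<in>{0..2*p+1}.
       br1 (b1 i) (b1 k) = (\<Sum>l\<in>{0..2*p+1}. sm1 (str_const p i k l) (b1 l))"
    using HpA1_structure_constants[OF assms(1-3)] by blast
  obtain b2 where b2: "inj_on b2 {0..2*p+1}" "\<not> module.dependent sm2 (b2 ` {0..2*p+1})"
    "module.span sm2 (b2 ` {0..2*p+1}) = UNIV"
    "\<forall>i\<in>{0..2*p+1}. \<forall>k\<in>{0..2*p+1}.
       br2 (b2 i) (b2 k) = (\<Sum>l\<in>{0..2*p+1}. sm2 (str_const p i k l) (b2 l))"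
    using HpA1_structure_constants[OF assms(1,4,5)] by blast
  show ?thesis
    by (rule lie_iso_of_structure_constants[where c = "str_const p", OF assms(2,4) b1(1-3) b2(1-3)])
       (use b1(4) b2(4) in auto)
qed

theorem theorem5p1:
  fixes sm :: "complex \<Rightarrow> 'a::ab_group_add \<Rightarrow> 'a" and br :: "'a \<Rightarrow> 'a \<Rightarrow> 'a"
    and p :: nat
  assumes "p \<ge> 1" and "lie_algebra sm br" and "fin_dim sm" and "HpA p 1 sm br"
  shows "(\<exists>(x :: nat \<Rightarrow> 'a) y.
            inj_on x {1..2*p+1} \<and> y \<notin> x ` {1..2*p+1}
          \<and> \<not> module.dependent sm (x ` {1..2*p+1} \<union> {y})
          \<and> module.span sm (x ` {1..2*p+1} \<union> {y}) = UNIV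
          \<and> NP sm br = module.span sm {y}
          \<and> (\<forall>l\<in>{1..p}. br (x (2*l-1)) (x (2*l)) = x (2*p+1))
          \<and> br (x 1) y = y
          \<and> (\<forall>i\<in>{2..2*p+1}. br (x i) y = 0)
          \<and> (\<forall>i j. 1 \<le> i \<and> i < j \<and> j \<le> 2*p+1 \<and> \<not> (\<exists>l\<in>{1..p}. i = 2*l-1 \<and> j = 2*l)
                   \<longrightarrow> br (x i) (x j) = 0))
       \<and> (\<forall>(sm2 :: complex \<Rightarrow> 'b::ab_group_add \<Rightarrow> 'b) br2.
            lie_algebra sm2 br2 \<and> fin_dim sm2 \<and> HpA p 1 sm2 br2
            \<longrightarrow> (\<exists>f. lie_iso sm br sm2 br2 f))"
proof -
  obtain \<phi> where "HpA1_algebra sm br p \<phi>"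
    using HpA1_algebra_if_HpA[OF assms(1,2,4)] .
  then interpret HpA1_algebra sm br p \<phi> .
  show ?thesis
    using normal_form HpA1_isomorphic[OF assms(1,2,4)] by blast
qed

end
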